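(* Let $U_1,U_2,U_3,U_4$ be subspaces of a vector space $V$. If for each $j\in\{3,4\}$ we have $U_1\cap U_2\subseteq U_j$ and $U_j=U_j\cap U_1+U_j\cap U_2$, then $$U_3\cap U_4=U_3\cap U_4\cap U_1+U_3\cap U_4\cap U_2.$$ *)

theory Defs
  imports Main HOL.Vector_Spaces "HOL-Library.Set_Algebras"
begin

end

theory Submission
  imports Defs
begin

text \<open>If \<open>U\<^sub>1 \<inter> U\<^sub>2 \<subseteq> W\<close> and \<open>W = W \<inter> U\<^sub>1 + W \<inter> U\<^sub>2\<close>, then \<open>W\<close> contains both components
  of any decomposition \<open>a + b\<close> (\<open>a \<in> U\<^sub>1\<close>, \<open>b \<in> U\<^sub>2\<close>) of each of its elements, because such a
  decomposition is unique up to an element of \<open>U\<^sub>1 \<inter> U\<^sub>2\<close>. Decomposing \<open>x \<in> U\<^sub>3 \<inter> U\<^sub>4\<close> inside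
  \<open>U\<^sub>3\<close> and applying this to \<open>W = U\<^sub>4\<close> puts both components in \<open>U\<^sub>3 \<inter> U\<^sub>4\<close>.\<close>

context module
begin

lemma subspace_set_plus_subset:
  assumes "subspace W" "A \<subseteq> W" "B \<subseteq> W"
  shows "A + B \<subseteq> W"
  using assms by (auto elim!: set_plus_elim intro: subspace_add)

lemma decomposition_unique_mod_inter:
  assumes "subspace U1" "subspace U2"
    and "a \<in> U1" "a' \<in> U1" "b \<in> U2" "b' \<in> U2"
    and "a + b = a' + b'"
  shows "a - a' \<in> U1 \<inter> U2"
proof -
  have "a - a' = b' - b"
    using \<open>a + b = a' + b'\<close> by (simp add: algebra_simps)
  moreover have "a - a' \<in> U1" "b' - b \<in> U2"
    using assms subspace_diff by blast+
  ultimately show ?thesis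
    by simp
qed

lemma components_in_split_subspace:
  assumes "subspace U1" "subspace U2" "subspace W"
    and "U1 \<inter> U2 \<subseteq> W" "W = (W \<inter> U1) + (W \<inter> U2)"
    and "a \<in> U1" "b \<in> U2" "a + b \<in> W"
  shows "a \<in> W" "b \<in> W"
proof -
  obtain a' b' where a': "a' \<in> W \<inter> U1" and "b' \<in> W \<inter> U2" and "a + b = a' + b'"
    using \<open>a + b \<in> W\<close> \<open>W = (W \<inter> U1) + (W \<inter> U2)\<close> by (metis set_plus_elim)
  then have "a - a' \<in> W"
    using decomposition_unique_mod_inter assms by blast
  then have "a' + (a - a') \<in> W"
    using a' \<open>subspace W\<close> subspace_add by blast
  then show "a \<in> W"
    by simp
  then have "(a + b) - a \<in> W"
    using \<open>a + b \<in> W\<close> \<open>subspace W\<close> subspace_diff by blast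
  then show "b \<in> W"
    by simp
qed

end

theorem lemma4p2:
  fixes scale :: "'k::field \<Rightarrow> 'v::ab_group_add \<Rightarrow> 'v"
    and U1 U2 U3 U4 :: "'v set"
  assumes "vector_space scale"
    and "module.subspace scale U1" and "module.subspace scale U2"
    and "module.subspace scale U3" and "module.subspace scale U4"
    and "\<forall>j\<in>{U3, U4}. U1 \<inter> U2 \<subseteq> j \<and> j = (j \<inter> U1) + (j \<inter> U2)"
  shows "U3 \<inter> U4 = (U3 \<inter> U4 \<inter> U1) + (U3 \<inter> U4 \<inter> U2)"
proof -
  interpret module scale
    using \<open>vector_space scale\<close> by (simp add: vector_space_def module_def)
  have split3: "U3 = (U3 \<inter> U1) + (U3 \<inter> U2)"
    and split4: "U1 \<inter> U2 \<subseteq> U4" "U4 = (U4 \<inter> U1) + (U4 \<inter> U2)"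
    using assms(6) by auto
  have "x \<in> (U3 \<inter> U4 \<inter> U1) + (U3 \<inter> U4 \<inter> U2)" if x: "x \<in> U3 \<inter> U4" for x
  proof -
    obtain a b where a: "a \<in> U3 \<inter> U1" and b: "b \<in> U3 \<inter> U2" and "x = a + b"
      using x split3 by (metis IntD1 set_plus_elim)
    then have "a \<in> U4" "b \<in> U4"
      using components_in_split_subspace[OF _ _ _ split4] x assms(2,3,5) by auto
    with a b \<open>x = a + b\<close> show ?thesis
      by (auto intro: set_plus_intro)
  qed
  moreover have "(U3 \<inter> U4 \<inter> U1) + (U3 \<inter> U4 \<inter> U2) \<subseteq> U3 \<inter> U4"
    using assms(4,5) by (intro subspace_set_plus_subset subspace_inter) auto
  ultimately show ?thesis
    by blast
qed

end
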